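(* Let $m\ge2$ be an integer and let $A$ be a left brace with $A^{(3)}=A^{m+1}=\{0\}$. Let $a\in A$, and define $a_1=a$ and $a_{j+1}=a*a_j$ for $j\ge1$. Let $t=\sum_{i=1}^m t_ia_i$ with $t_i\in\mathbb{Z}$. Then the inverse of $t$ in the group $(A,\cdot)$ is \[t^{-1}=\sum_{j=1}^m\Bigl(-\sum_{k=0}^{j-1}\binom{-t_1}{k}t_{j-k}\Bigr)a_j.\]
   Context: A left brace $(A,+,\cdot)$ is a set $A$ with two binary operations such that $(A,+)$ is an abelian group, $(A,\cdot)$ is a group, and $a(b+c)=ab-a+ac$ for all $a,b,c\in A$. In a left brace, $a*b=-a+ab-b$. For subsets $L,M\subseteq A$, $L*M$ is the subgroup of $(A,+)$ generated by $\{l*m\mid l\in L,m\in M\}$. Set $A^{(1)}=A$, $A^{(r+1)}=A^{(r)}*A$, and $A^1=A$, $A^{r+1}=A*A^r$ for $r\ge1$. Generalised binomial coefficients: for $n\in\mathbb{Z}$ and integer $k\ge0$, $\binom{n}{0}=1$ and $\binom{n}{k}=\frac{n(n-1)\cdots(n-k+1)}{k!}$ for $k>0$. *)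

theory Defs
  imports Main
begin

text \<open>A left brace: the additive group is the ambient abelian group (type class
ab_group_add); the multiplication is a separate operation mul.\<close>

definition is_group_op :: "('a \<Rightarrow> 'a \<Rightarrow> 'a) \<Rightarrow> bool" where
  "is_group_op mul \<longleftrightarrow>
     (\<forall>x y z. mul (mul x y) z = mul x (mul y z)) \<and>
     (\<exists>e. (\<forall>x. mul e x = x \<and> mul x e = x) \<and> (\<forall>x. \<exists>y. mul x y = e \<and> mul y x = e))"

definition left_brace :: "('a::ab_group_add \<Rightarrow> 'a \<Rightarrow> 'a) \<Rightarrow> bool" where
  "left_brace mul \<longleftrightarrow> is_group_op mul \<and>
     (\<forall>a b c. mul a (b + c) = mul a b - a + mul a c)"

definition mul_one :: "('a \<Rightarrow> 'a \<Rightarrow> 'a) \<Rightarrow> 'a" where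
  "mul_one mul = (THE e. \<forall>x. mul e x = x \<and> mul x e = x)"

definition mul_inv :: "('a \<Rightarrow> 'a \<Rightarrow> 'a) \<Rightarrow> 'a \<Rightarrow> 'a" where
  "mul_inv mul x = (THE y. mul x y = mul_one mul \<and> mul y x = mul_one mul)"

definition bstar :: "('a::ab_group_add \<Rightarrow> 'a \<Rightarrow> 'a) \<Rightarrow> 'a \<Rightarrow> 'a \<Rightarrow> 'a" where
  "bstar mul a b = - a + mul a b - b"

definition add_span :: "'a::ab_group_add set \<Rightarrow> 'a set" where
  "add_span S = \<Inter>{H. 0 \<in> H \<and> (\<forall>x\<in>H. \<forall>y\<in>H. x - y \<in> H) \<and> S \<subseteq> H}"

definition star_set :: "('a::ab_group_add \<Rightarrow> 'a \<Rightarrow> 'a) \<Rightarrow> 'a set \<Rightarrow> 'a set \<Rightarrow> 'a set" where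
  "star_set mul L M = add_span {bstar mul l x | l x. l \<in> L \<and> x \<in> M}"

text \<open>right_series mul r = A^(r), left_series mul r = A^r, for r \<ge> 1
  (index 0 is also set to A, by convention; it is never used).\<close>
fun right_series :: "('a::ab_group_add \<Rightarrow> 'a \<Rightarrow> 'a) \<Rightarrow> nat \<Rightarrow> 'a set" where
  "right_series mul 0 = UNIV"
| "right_series mul (Suc 0) = UNIV"
| "right_series mul (Suc (Suc r)) = star_set mul (right_series mul (Suc r)) UNIV"

fun left_series :: "('a::ab_group_add \<Rightarrow> 'a \<Rightarrow> 'a) \<Rightarrow> nat \<Rightarrow> 'a set" where
  "left_series mul 0 = UNIV"
| "left_series mul (Suc 0) = UNIV"
| "left_series mul (Suc (Suc r)) = star_set mul UNIV (left_series mul (Suc r))"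

text \<open>a_1 = a, a_(j+1) = a * a_j (index 0 unused, set to a).\<close>
fun aseq :: "('a::ab_group_add \<Rightarrow> 'a \<Rightarrow> 'a) \<Rightarrow> 'a \<Rightarrow> nat \<Rightarrow> 'a" where
  "aseq mul a 0 = a"
| "aseq mul a (Suc 0) = a"
| "aseq mul a (Suc (Suc j)) = bstar mul a (aseq mul a (Suc j))"

definition zmult :: "int \<Rightarrow> 'a::ab_group_add \<Rightarrow> 'a" where
  "zmult k x = (if 0 \<le> k then (\<Sum>_\<in>{..<nat k}. x) else - (\<Sum>_\<in>{..<nat (-k)}. x))"

text \<open>Generalised binomial coefficient n(n-1)...(n-k+1)/k! for integer n (the division is exact).\<close>
definition gbinom :: "int \<Rightarrow> nat \<Rightarrow> int" where
  "gbinom n k = (\<Prod>i<k. n - int i) div fact k"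

end

theory Submission
  imports Defs "HOL.Binomial_Plus"
begin

text \<open>Put \<open>\<lambda> x y = -x + x y\<close>. Each \<open>\<lambda> x\<close> is an endomorphism of \<open>(A,+)\<close>,
  \<open>\<lambda> (x y) = \<lambda> x \<circ> \<lambda> y\<close>, and \<open>u t = u + \<lambda> u t\<close>. Since \<open>A\<^sup>(\<^sup>3\<^sup>) = 0\<close>, every \<open>s \<in> A * A\<close>
  (in particular every \<open>a\<^sub>j\<close> with \<open>j \<ge> 2\<close>) has \<open>\<lambda> s = id\<close>, hence \<open>\<lambda> (x + s) = \<lambda> x\<close>. So any
  \<open>u = \<Sum> c\<^sub>j a\<^sub>j\<close> has \<open>\<lambda> u = \<lambda> (c\<^sub>1 a)\<close>, and \<open>\<lambda> (n a) = (\<lambda> a)\<^sup>n\<close>. As \<open>a\<^sub>m\<^sub>+\<^sub>1 = 0\<close>, \<open>\<lambda> a\<close> maps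
  \<open>\<Sum> c\<^sub>j a\<^sub>j\<close> to \<open>\<Sum> (c\<^sub>j + c\<^sub>j\<^sub>-\<^sub>1) a\<^sub>j\<close>, so by Pascal's rule \<open>\<lambda> (n a)\<close> convolves the coefficients
  with \<open>binom n k\<close>, for every integer \<open>n\<close>. Taking \<open>n = -t\<^sub>1\<close>, the element \<open>u = -\<lambda> (n a) t\<close>
  satisfies \<open>u t = u + \<lambda> u t = 0\<close>.\<close>

lemma gbinom_0 [simp]: "gbinom n 0 = 1"
  by (simp add: gbinom_def)

lemma gbinom_0_Suc [simp]: "gbinom 0 (Suc k) = 0"
  by (simp add: gbinom_def lessThan_Suc_eq_insert_0)

lemma gbinom_Suc_Suc: "gbinom (n + 1) (Suc k) = gbinom n k + gbinom n (Suc k)"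
  using gbinomial_int_Suc_Suc[of n k]
  unfolding gbinom_def gbinomial_prod_rev atLeast0LessThan .

lemma zmult_0_left [simp]: "zmult 0 x = 0"
  by (simp add: zmult_def)

lemma zmult_add1: "zmult (k + 1) x = zmult k x + x"
proof (cases "0 \<le> k")
  case True
  then have "nat (k + 1) = Suc (nat k)" by simp
  with True show ?thesis by (simp add: zmult_def add.commute)
next
  case False
  show ?thesis
  proof (cases "k = -1")
    case True
    then show ?thesis by (simp add: zmult_def)
  next
    case k: False
    with \<open>\<not> 0 \<le> k\<close> have "nat (-k) = Suc (nat (- (k + 1)))" by simp
    with \<open>\<not> 0 \<le> k\<close> k show ?thesis by (simp add: zmult_def add.commute)
  qed
qed

lemma zmult_diff1: "zmult (k - 1) x = zmult k x - x"
  using zmult_add1[of "k - 1" x] by simp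

lemma zmult_add_left: "zmult (k + l) x = zmult k x + zmult l x"
proof (induct l rule: int_induct[where k = 0])
  case (step1 i)
  then show ?case using zmult_add1[of "k + i" x] by (simp add: zmult_add1 add.assoc)
next
  case (step2 i)
  then show ?case using zmult_diff1[of "k + i" x] by (simp add: zmult_diff1 add_diff_eq)
qed simp

lemma additive_zmult:
  assumes "\<And>x y. f (x + y) = f x + f y"
  shows "f (zmult k x) = zmult k (f x)"
proof -
  have "f 0 = 0" using assms[of 0 0] by simp
  moreover have "f (x - y) = f x - f y" for x y
    using assms[of "x - y" y] by (simp add: algebra_simps)
  ultimately show ?thesis
    by (induct k rule: int_induct[where k = 0]) (simp_all add: zmult_add1 zmult_diff1 assms)
qed

lemma zmult_add_right: "zmult k (x + y) = zmult k x + zmult k y"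
  by (induct k rule: int_induct[where k = 0]) (simp_all add: zmult_add1 zmult_diff1 algebra_simps)

lemma zmult_0_right [simp]: "zmult k 0 = 0"
  using zmult_add_right[of k 0 0] by simp

lemma add_span_0: "0 \<in> add_span S"
  and add_span_diff: "x \<in> add_span S \<Longrightarrow> y \<in> add_span S \<Longrightarrow> x - y \<in> add_span S"
  unfolding add_span_def by blast+

lemma add_span_add: "x \<in> add_span S \<Longrightarrow> y \<in> add_span S \<Longrightarrow> x + y \<in> add_span S"
  using add_span_diff[of x S "0 - y"] add_span_diff[OF add_span_0, of y S] by simp

lemma add_span_zmult: "x \<in> add_span S \<Longrightarrow> zmult k x \<in> add_span S"
  by (induct k rule: int_induct[where k = 0])
     (simp_all add: zmult_add1 zmult_diff1 add_span_0 add_span_add add_span_diff)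

lemma add_span_sum: "(\<And>i. i \<in> I \<Longrightarrow> f i \<in> add_span S) \<Longrightarrow> sum f I \<in> add_span S"
  by (induct I rule: infinite_finite_induct) (simp_all add: add_span_0 add_span_add)

lemma star_set_memI: "l \<in> L \<Longrightarrow> x \<in> M \<Longrightarrow> bstar mul l x \<in> star_set mul L M"
  unfolding star_set_def add_span_def by blast

locale brace =
  fixes mul :: "'a::ab_group_add \<Rightarrow> 'a \<Rightarrow> 'a"
  assumes left_brace: "left_brace mul"
begin

definition lam :: "'a \<Rightarrow> 'a \<Rightarrow> 'a" where
  "lam x y = - x + mul x y"

lemma mul_eq_add_lam: "mul x y = x + lam x y"
  by (simp add: lam_def)

lemma lam_eq_add_bstar: "lam x y = y + bstar mul x y"
  by (simp add: lam_def bstar_def)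

lemma mul_assoc: "mul (mul x y) z = mul x (mul y z)"
  using left_brace unfolding left_brace_def is_group_op_def by blast

lemma mul_add_right: "mul x (y + z) = mul x y - x + mul x z"
  using left_brace unfolding left_brace_def by blast

lemma lam_add: "lam x (y + z) = lam x y + lam x z"
  by (simp add: lam_def mul_add_right algebra_simps)

lemma lam_zmult: "lam x (zmult k y) = zmult k (lam x y)"
  by (rule additive_zmult) (rule lam_add)

lemma lam_sum: "lam x (sum f I) = (\<Sum>i\<in>I. lam x (f i))"
proof -
  have "lam x 0 = 0" using lam_add[of x 0 0] by simp
  then show ?thesis by (induct I rule: infinite_finite_induct) (simp_all add: lam_add)
qed

lemma mul_0_right: "mul x 0 = x"
  using lam_add[of x 0 0] by (simp add: lam_def)

lemma mul_0_left: "mul 0 x = x"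
  and mul_right_inverse_0: "\<exists>y. mul y x = 0"
proof -
  obtain e where e: "\<forall>x. mul e x = x \<and> mul x e = x" "\<forall>x. \<exists>y. mul x y = e \<and> mul y x = e"
    using left_brace unfolding left_brace_def is_group_op_def by blast
  have "e = 0" using e(1) mul_0_right[of e] by metis
  with e show "mul 0 x = x" "\<exists>y. mul y x = 0" by auto
qed

lemma lam_0_left: "lam 0 z = z"
  by (simp add: lam_def mul_0_left)

lemma lam_mul: "lam (mul x y) z = lam x (lam y z)"
proof -
  have "lam (mul x y) z = - mul x y + mul x (y + lam y z)"
    by (simp add: lam_def mul_assoc mul_eq_add_lam[of y z, symmetric])
  also have "\<dots> = - mul x y + (mul x y - x + mul x (lam y z))"
    by (simp only: mul_add_right)
  also have "\<dots> = lam x (lam y z)"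
    by (simp add: lam_def)
  finally show ?thesis .
qed

lemma mul_left_cancel:
  assumes "mul x y = mul x z"
  shows "y = z"
proof -
  obtain x' where x': "mul x' x = 0" using mul_right_inverse_0 by blast
  have "mul x' (mul x v) = v" for v
    using mul_assoc[of x' x v] by (simp add: x' mul_0_left)
  from this[of y] this[of z] show ?thesis by (metis assms)
qed

lemma lam_inj: "lam x y = lam x z \<Longrightarrow> y = z"
  by (rule mul_left_cancel[of x]) (simp add: mul_eq_add_lam)

lemma mul_one_eq_0: "mul_one mul = 0"
  unfolding mul_one_def
  by (rule the_equality) (auto simp: mul_0_left mul_0_right dest: spec[of _ 0])

lemma mul_inv_eqI:
  assumes "mul u x = 0"
  shows "mul_inv mul x = u"
proof -
  have "mul u (mul x u) = mul u 0"
    using mul_assoc[of u x u, symmetric] by (simp add: assms mul_0_left mul_0_right)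
  then have "mul x u = 0" by (rule mul_left_cancel)
  have left_inverse_unique: "v = u" if "mul v x = 0" for v
  proof -
    have "v = mul v (mul x u)" by (simp add: \<open>mul x u = 0\<close> mul_0_right)
    also have "\<dots> = u" using mul_assoc[of v x u, symmetric] by (simp add: that mul_0_left)
    finally show ?thesis .
  qed
  show ?thesis
    unfolding mul_inv_def mul_one_eq_0
  proof (rule the_equality)
    show "mul x u = 0 \<and> mul u x = 0" using \<open>mul x u = 0\<close> assms by blast
    show "y = u" if "mul x y = 0 \<and> mul y x = 0" for y
      using that left_inverse_unique by blast
  qed
qed

text \<open>If \<open>\<lambda> s = id\<close> then \<open>x + s = s x\<close>.\<close>
lemma lam_add_trivial:
  assumes "\<And>z. lam s z = z"
  shows "lam (x + s) z = lam x z"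
proof -
  have "mul s x = x + s" by (simp add: mul_eq_add_lam assms add.commute)
  then have "lam (x + s) z = lam s (lam x z)" by (metis lam_mul)
  then show ?thesis by (simp only: assms)
qed

end

definition shift :: "(nat \<Rightarrow> int) \<Rightarrow> nat \<Rightarrow> int" where
  "shift c i = (if i \<le> 1 then 0 else c (i - 1))"

definition binom_conv :: "int \<Rightarrow> (nat \<Rightarrow> int) \<Rightarrow> nat \<Rightarrow> int" where
  "binom_conv n c j = (\<Sum>k=0..j-1. gbinom n k * c (j - k))"

lemma binom_conv_1: "binom_conv n c (Suc 0) = c (Suc 0)"
  by (simp add: binom_conv_def)

lemma binom_conv_0: "1 \<le> j \<Longrightarrow> binom_conv 0 c j = c j"
  unfolding binom_conv_def
  by (cases j; cases "j - 1") (simp_all add: sum.atLeast0_atMost_Suc_shift del: sum.cl_ivl_Suc)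

lemma binom_conv_Suc:
  assumes "1 \<le> j"
  shows "binom_conv (n + 1) c j = binom_conv n c j + shift (binom_conv n c) j"
proof -
  obtain J where j: "j = Suc J" using assms by (cases j) auto
  show ?thesis
  proof (cases J)
    case 0
    then show ?thesis using j by (simp add: binom_conv_def shift_def)
  next
    case (Suc J')
    let ?g = "\<lambda>k. c (Suc J' - k)"
    have "binom_conv (n + 1) c j = c j + (\<Sum>k=0..J'. gbinom (n + 1) (Suc k) * ?g k)"
      unfolding binom_conv_def j Suc
      by (simp add: sum.atLeast0_atMost_Suc_shift del: sum.cl_ivl_Suc)
    also have "\<dots> = (c j + (\<Sum>k=0..J'. gbinom n (Suc k) * ?g k)) + (\<Sum>k=0..J'. gbinom n k * ?g k)"
      unfolding gbinom_Suc_Suc distrib_right sum.distrib by (simp add: ac_simps)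
    also have "c j + (\<Sum>k=0..J'. gbinom n (Suc k) * ?g k) = binom_conv n c j"
      unfolding binom_conv_def j Suc
      by (simp add: sum.atLeast0_atMost_Suc_shift del: sum.cl_ivl_Suc)
    also have "(\<Sum>k=0..J'. gbinom n k * ?g k) = shift (binom_conv n c) j"
      unfolding binom_conv_def shift_def j Suc by simp
    finally show ?thesis .
  qed
qed

locale nilpotent_brace = brace +
  fixes m :: nat
  assumes right_series_3: "right_series mul 3 = {0}"
    and left_series_m: "left_series mul (m + 1) = {0}"
begin

definition comb :: "'a \<Rightarrow> (nat \<Rightarrow> int) \<Rightarrow> 'a" where
  "comb a c = (\<Sum>i=1..m. zmult (c i) (aseq mul a i))"

lemma comb_add: "comb a c + comb a d = comb a (\<lambda>i. c i + d i)"
  by (simp add: comb_def zmult_add_left sum.distrib)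

lemma comb_zero [simp]: "comb a (\<lambda>_. 0) = 0"
  by (simp add: comb_def)

lemma comb_cong: "(\<And>i. 1 \<le> i \<Longrightarrow> i \<le> m \<Longrightarrow> c i = d i) \<Longrightarrow> comb a c = comb a d"
  unfolding comb_def by (rule sum.cong) auto

lemma lam_square_trivial:
  assumes "x \<in> star_set mul UNIV UNIV"
  shows "lam x z = z"
proof -
  have "bstar mul x z \<in> right_series mul 3"
    using assms by (simp add: numeral_3_eq_3 star_set_memI)
  then show ?thesis by (simp add: right_series_3 lam_eq_add_bstar)
qed

lemma aseq_in_square:
  assumes "2 \<le> j"
  shows "aseq mul a j \<in> star_set mul UNIV UNIV"
  using assms by (auto simp: le_iff_add numeral_2_eq_2 star_set_memI)

lemma aseq_in_left_series: "aseq mul a (Suc j) \<in> left_series mul (Suc j)"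
  by (induct j) (auto intro: star_set_memI)

lemma aseq_Suc_m: "aseq mul a (Suc m) = 0"
  using aseq_in_left_series[of a m] left_series_m by simp

lemma lam_add_square_combination:
  "lam (x + (\<Sum>i\<in>I. zmult (c i) (aseq mul a i))) z = lam x z" if "I \<subseteq> {2..}"
proof (rule lam_add_trivial)
  show "lam (\<Sum>i\<in>I. zmult (c i) (aseq mul a i)) w = w" for w
    unfolding star_set_def using that
    by (intro lam_square_trivial[unfolded star_set_def] add_span_sum add_span_zmult
        aseq_in_square[unfolded star_set_def]) auto
qed

lemma lam_comb: "1 \<le> m \<Longrightarrow> lam (comb a c) z = lam (zmult (c 1) a) z"
  unfolding comb_def
  using lam_add_square_combination[of "{2..m}" "zmult (c 1) a"]
  by (simp add: sum.atLeast_Suc_atMost numeral_2_eq_2)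

lemma lam_a_comb: "lam a (comb a c) = comb a (\<lambda>i. c i + shift c i)"
proof -
  let ?g = "\<lambda>i. zmult (shift c i) (aseq mul a i)"
  have "lam a (aseq mul a i) = aseq mul a i + aseq mul a (Suc i)" if "1 \<le> i" for i
    using that by (cases i) (simp_all add: lam_eq_add_bstar)
  then have "lam a (comb a c) = comb a c + (\<Sum>i=1..m. zmult (c i) (aseq mul a (Suc i)))"
    unfolding comb_def lam_sum lam_zmult by (simp add: zmult_add_right sum.distrib)
  also have "(\<Sum>i=1..m. zmult (c i) (aseq mul a (Suc i))) = (\<Sum>i=1..m. ?g (Suc i))"
    by (simp add: shift_def)
  also have "\<dots> = comb a (shift c)"
  proof (cases "m = 0")
    case False
    then have "sum ?g {1..m} + ?g (Suc m) = ?g 1 + (\<Sum>i=1..m. ?g (Suc i))"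
      by (intro sum.Suc_reindex_ivl) simp
    then show ?thesis by (simp add: comb_def aseq_Suc_m shift_def)
  qed (unfold comb_def, simp)
  finally show ?thesis by (simp add: comb_add)
qed

text \<open>\<open>a \<cdot> na = (n+1)a + n a\<^sub>2\<close>, and \<open>n a\<^sub>2\<close> acts trivially.\<close>
lemma lam_zmult_add1: "lam (zmult (n + 1) a) z = lam a (lam (zmult n a) z)"
proof -
  have "lam a a = a + aseq mul a 2"
    by (simp add: numeral_2_eq_2 lam_eq_add_bstar)
  then have "mul a (zmult n a) = a + (zmult n a + zmult n (aseq mul a 2))"
    by (simp only: mul_eq_add_lam[of a] lam_zmult zmult_add_right)
  also have "\<dots> = zmult (n + 1) a + zmult n (aseq mul a 2)"
    by (simp only: zmult_add1) (simp add: algebra_simps)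
  finally have "mul a (zmult n a) = zmult (n + 1) a + zmult n (aseq mul a 2)" .
  moreover have "lam (zmult (n + 1) a + zmult n (aseq mul a 2)) z = lam (zmult (n + 1) a) z"
    using lam_add_square_combination[of "{2}" _ "\<lambda>_. n"] by simp
  ultimately show ?thesis by (metis lam_mul)
qed

lemma lam_zmult_comb: "lam (zmult n a) (comb a c) = comb a (binom_conv n c)"
proof (induct n arbitrary: c rule: int_induct[where k = 0])
  case base
  show ?case by (simp add: lam_0_left) (rule comb_cong, simp add: binom_conv_0)
next
  case (step1 n)
  have "lam (zmult (n + 1) a) (comb a c) = lam a (comb a (binom_conv n c))"
    by (simp add: lam_zmult_add1 step1)
  also have "\<dots> = comb a (binom_conv (n + 1) c)"
    by (simp add: lam_a_comb binom_conv_Suc cong: comb_cong)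
  finally show ?case .
next
  case (step2 n)
  have "lam a (lam (zmult (n - 1) a) (comb a c)) = comb a (binom_conv n c)"
    using lam_zmult_add1[of "n - 1"] step2 by simp
  also have "\<dots> = lam a (comb a (binom_conv (n - 1) c))"
    using binom_conv_Suc[of _ "n - 1"] by (simp add: lam_a_comb cong: comb_cong)
  finally show ?case by (rule lam_inj)
qed

end

theorem mainTheorem13:
  fixes mul :: "'a::ab_group_add \<Rightarrow> 'a \<Rightarrow> 'a"
    and m :: nat and a :: 'a and t :: "nat \<Rightarrow> int"
  assumes "m \<ge> 2"
    and "left_brace mul"
    and "right_series mul 3 = {0}"
    and "left_series mul (m + 1) = {0}"
  shows "mul_inv mul (\<Sum>i=1..m. zmult (t i) (aseq mul a i)) =
         (\<Sum>j=1..m. zmult (- (\<Sum>k=0..j-1. gbinom (- t 1) k * t (j - k))) (aseq mul a j))"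
proof -
  interpret nilpotent_brace mul m
    using assms(2-4) by unfold_locales
  define u where "u = comb a (\<lambda>j. - binom_conv (- t 1) t j)"
  have "lam u z = lam (zmult (- t 1) a) z" for z
    using lam_comb[of a "\<lambda>j. - binom_conv (- t 1) t j" z] assms(1)
    by (simp add: u_def binom_conv_1)
  then have "lam u (comb a t) = comb a (binom_conv (- t 1) t)"
    by (simp add: lam_zmult_comb)
  then have "mul u (comb a t) = 0"
    by (simp add: mul_eq_add_lam u_def comb_add)
  then have "mul_inv mul (comb a t) = u"
    by (rule mul_inv_eqI)
  then show ?thesis
    by (simp add: comb_def u_def binom_conv_def)
qed

end
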